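(* $\mathfrak{L}(\mathbf{F}_2)^w_{O(n)} \subsetneq \mathfrak{L}(\mathbf{F}_2\times\mathbf{F}_2)^w_{O(n)}$.
   Context: For a group $G$ with identity $e$, a $G$-automaton is a tuple $(Q,\Sigma,G,\delta,q_0,Q_a)$ where $Q$ is a finite set of states, $\Sigma$ a finite input alphabet, $q_0\in Q$ the initial state, $Q_a\subseteq Q$ the accepting states, and $\delta$ assigns to each $(q,\sigma)\in Q\times(\Sigma\cup\{\varepsilon\})$ a finite set of pairs $(q',m)\in Q\times G$. The register holds an element of $G$, initially $e$; using a transition $(q',m)\in\delta(q,\sigma)$ (one step) the automaton reads $\sigma$ (or nothing), moves to $q'$ and replaces the register content $x$ by $xm$. A word is accepted if some computation reads it entirely and ends in an accepting state with register equal to $e$. A $G$-automaton recognizing $\mathtt{L}$ is weakly $t(n)$ time-bounded if every $x\in\mathtt{L}$ with $|x|=n$ has an accepting computation of at most $t(n)$ steps; $\mathfrak{L}(G)^w_{O(n)}$ is the class of languages recognized by weakly $t(n)$ time-bounded $G$-automata for some $t(n)=O(n)$. $\mathbf{F}_2$ is the free group of rank 2. *)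

theory Defs
  imports "HOL-Algebra.Group"
begin

text \<open>Letters: (generator, sign); generator False = a, True = b; sign True = positive.
  Elements are freely reduced words; multiplication is concatenation followed by free reduction.\<close>

type_synonym f2letter = "bool \<times> bool"

definition cancels :: "f2letter \<Rightarrow> f2letter \<Rightarrow> bool" where
  "cancels x y \<longleftrightarrow> fst x = fst y \<and> snd x \<noteq> snd y"

fun freely_reduced :: "f2letter list \<Rightarrow> bool" where
  "freely_reduced (x # y # ys) = (\<not> cancels x y \<and> freely_reduced (y # ys))"
| "freely_reduced _ = True"

fun push :: "f2letter \<Rightarrow> f2letter list \<Rightarrow> f2letter list" where
  "push x [] = [x]"
| "push x (y # ys) = (if cancels x y then ys else x # y # ys)"

definition F2 :: "f2letter list monoid" where
  "F2 = \<lparr>carrier = {w. freely_reduced w}, mult = (\<lambda>u v. foldr push u v), one = []\<rparr>"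

record ('q, 's, 'g) gautomaton =
  states :: "'q set"
  alphabet :: "'s set"
  init :: 'q
  accepting :: "'q set"
  trans :: "('q \<times> 's option \<times> 'q \<times> 'g) set"
    \<comment> \<open>(q, \<sigma>, q', m) means (q', m) \<in> \<delta>(q, \<sigma>); None stands for \<epsilon>\<close>

definition wf_gaut :: "('g, 'x) monoid_scheme \<Rightarrow> ('q, 's, 'g) gautomaton \<Rightarrow> bool" where
  "wf_gaut G A \<longleftrightarrow> finite (states A) \<and> finite (alphabet A) \<and> finite (trans A)
     \<and> init A \<in> states A \<and> accepting A \<subseteq> states A
     \<and> (\<forall>(q, s, q', m) \<in> trans A. q \<in> states A \<and> q' \<in> states A \<and> m \<in> carrier G
          \<and> (\<forall>a. s = Some a \<longrightarrow> a \<in> alphabet A))"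

inductive gpath :: "('q, 's, 'g) gautomaton \<Rightarrow> 'q \<Rightarrow> ('q \<times> 's option \<times> 'q \<times> 'g) list \<Rightarrow> 'q \<Rightarrow> bool"
  for A where
  nil: "gpath A q [] q"
| step: "(q, s, q', m) \<in> trans A \<Longrightarrow> gpath A q' ts q'' \<Longrightarrow> gpath A q ((q, s, q', m) # ts) q''"

definition read_word :: "('q \<times> 's option \<times> 'q \<times> 'g) list \<Rightarrow> 's list" where
  "read_word ts = concat (map (\<lambda>(_, s, _, _). case s of None \<Rightarrow> [] | Some a \<Rightarrow> [a]) ts)"

definition register :: "('g, 'x) monoid_scheme \<Rightarrow> ('q \<times> 's option \<times> 'q \<times> 'g) list \<Rightarrow> 'g" where
  "register G ts = foldl (\<lambda>x (_, _, _, m). x \<otimes>\<^bsub>G\<^esub> m) \<one>\<^bsub>G\<^esub> ts"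

definition accepting_comp :: "('g, 'x) monoid_scheme \<Rightarrow> ('q, 's, 'g) gautomaton \<Rightarrow> 's list
    \<Rightarrow> ('q \<times> 's option \<times> 'q \<times> 'g) list \<Rightarrow> bool" where
  "accepting_comp G A w ts \<longleftrightarrow> (\<exists>q. gpath A (init A) ts q \<and> q \<in> accepting A
       \<and> read_word ts = w \<and> register G ts = \<one>\<^bsub>G\<^esub>)"

definition gaut_lang :: "('g, 'x) monoid_scheme \<Rightarrow> ('q, 's, 'g) gautomaton \<Rightarrow> 's list set" where
  "gaut_lang G A = {w. \<exists>ts. accepting_comp G A w ts}"

definition weakly_time_bounded ::
    "('g, 'x) monoid_scheme \<Rightarrow> ('q, 's, 'g) gautomaton \<Rightarrow> (nat \<Rightarrow> nat) \<Rightarrow> bool" where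
  "weakly_time_bounded G A t \<longleftrightarrow>
     (\<forall>w \<in> gaut_lang G A. \<exists>ts. accepting_comp G A w ts \<and> length ts \<le> t (length w))"

definition linear_bound :: "(nat \<Rightarrow> nat) \<Rightarrow> bool" where
  "linear_bound t \<longleftrightarrow> (\<exists>c. \<forall>n. t n \<le> c * n + c)"

text \<open>The class of languages (over letters of type 's) recognized by weakly linear-time
  bounded G-automata; state sets are drawn from nat (any finite state set can be renamed).\<close>
definition weak_lin_class :: "('g, 'x) monoid_scheme \<Rightarrow> 's list set set" where
  "weak_lin_class G = {L. \<exists>(A :: (nat, 's, 'g) gautomaton) t.
      wf_gaut G A \<and> gaut_lang G A = L \<and> linear_bound t \<and> weakly_time_bounded G A t}"

end

(*
  Pairing every register label with the identity turns an F2-automaton into an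
  F2 x F2-automaton with the same computations, so the inclusion holds. For strictness take
  L = {0^n 1^n 2^n}: an F2 x F2-automaton recognizes it in linear time by keeping #0 - #1 and
  #1 - #2 as powers of a generator a in the two components of its register.

  No F2-automaton recognizes L at all. The register of an F2-automaton is a freely reduced
  word that behaves like a pushdown stack: each transition rewrites a suffix of bounded length.
  In a shortest accepting computation of a word of L, two loops (pairs of positions with equal
  states) whose register contributions cancel around the part between them can be neither
  deleted (by minimality) nor repeated (the pumped word leaves L). Hence no configuration
  repeats, and two nested segments that stay above different stack prefixes, starting and ending
  near them, have different profiles (states and stack tops at both ends). As there are finitely
  many profiles, this bounds the nesting depth of such segments and then the length of the
  computation by a constant depending only on the automaton, whereas L has arbitrarily long
  words.
*)
theory Submission
  imports Defs "HOL-Library.Sublist" "HOL-Library.Multiset"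
begin

section \<open>The free group of rank 2\<close>

lemma cancels_trans_eq: "cancels x y \<Longrightarrow> cancels y z \<Longrightarrow> x = z"
  by (cases x; cases y; cases z) (auto simp: cancels_def)

lemma freely_reduced_ConsD: "freely_reduced (x # xs) \<Longrightarrow> freely_reduced xs"
  by (cases xs) auto

lemma freely_reduced_appendD:
  "freely_reduced (u @ v) \<Longrightarrow> freely_reduced u \<and> freely_reduced v"
  by (induction u rule: freely_reduced.induct) (auto dest: freely_reduced_ConsD)

lemma freely_reduced_push: "freely_reduced v \<Longrightarrow> freely_reduced (push x v)"
  by (cases v) (auto dest: freely_reduced_ConsD)

lemma freely_reduced_foldr_push: "freely_reduced v \<Longrightarrow> freely_reduced (foldr push u v)"
  by (induction u) (auto intro: freely_reduced_push)

lemma push_push_cancel: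
  assumes "cancels x y" "freely_reduced v"
  shows "push x (push y v) = v"
  using assms by (cases v rule: freely_reduced.cases) (auto dest: cancels_trans_eq)

lemma foldr_push_push:
  assumes "freely_reduced u" "freely_reduced v"
  shows "foldr push (push x u) v = push x (foldr push u v)"
  using assms push_push_cancel[OF _ freely_reduced_foldr_push]
  by (cases u) (auto dest: freely_reduced_ConsD)

lemma foldr_push_assoc:
  assumes "freely_reduced v" "freely_reduced w"
  shows "foldr push (foldr push u v) w = foldr push u (foldr push v w)"
  using assms by (induction u) (auto simp: foldr_push_push freely_reduced_foldr_push)

definition inv_letter :: "f2letter \<Rightarrow> f2letter" where
  "inv_letter x = (fst x, \<not> snd x)"

lemma foldr_push_inverse: "freely_reduced u \<Longrightarrow> foldr push (rev (map inv_letter u)) u = []"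
  by (induction u) (auto simp: inv_letter_def cancels_def dest: freely_reduced_ConsD)

lemma F2_carrier: "carrier F2 = {w. freely_reduced w}"
  and F2_one: "\<one>\<^bsub>F2\<^esub> = []"
  and F2_mult: "u \<otimes>\<^bsub>F2\<^esub> v = foldr push u v"
  by (simp_all add: F2_def)

lemma group_F2: "group F2"
proof (rule groupI)
  fix u assume u: "u \<in> carrier F2"
  show "\<exists>v\<in>carrier F2. v \<otimes>\<^bsub>F2\<^esub> u = \<one>\<^bsub>F2\<^esub>"
  proof
    show "foldr push (rev (map inv_letter u)) [] \<in> carrier F2"
      by (simp add: F2_carrier freely_reduced_foldr_push)
    show "foldr push (rev (map inv_letter u)) [] \<otimes>\<^bsub>F2\<^esub> u = \<one>\<^bsub>F2\<^esub>"
      using u by (simp add: F2_def foldr_push_assoc foldr_push_inverse)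
  qed
qed (auto simp: F2_def freely_reduced_foldr_push foldr_push_assoc)

lemma foldr_push_reduced_append: "freely_reduced (u @ v) \<Longrightarrow> foldr push u v = u @ v"
proof (induction u)
  case (Cons x u)
  then show ?case by (cases "u @ v") (auto dest: freely_reduced_ConsD)
qed simp

lemma F2_mult_reduced_append:
  assumes "freely_reduced (u @ v)"
  shows "u @ v = u \<otimes>\<^bsub>F2\<^esub> v" "u \<in> carrier F2" "v \<in> carrier F2"
  using freely_reduced_appendD[OF assms] foldr_push_reduced_append[OF assms]
  by (simp_all add: F2_carrier F2_mult)

lemma F2_mult_common_prefix:
  assumes "u \<in> carrier F2"
  shows "\<exists>c s v'. u = c @ s \<and> u \<otimes>\<^bsub>F2\<^esub> v = c @ v' \<and> length s + length v' \<le> length v"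
proof -
  have "freely_reduced u" using assms by (simp add: F2_carrier)
  then show ?thesis
    unfolding F2_mult
  proof (induction u)
    case Nil
    show ?case by force
  next
    case (Cons x u)
    then obtain c s v' where IH: "u = c @ s" "foldr push u v = c @ v'"
      "length s + length v' \<le> length v"
      using freely_reduced_ConsD by blast
    show ?case
    proof (cases "c = [] \<and> v' \<noteq> [] \<and> cancels x (hd v')")
      case True
      then show ?thesis using IH
        by (intro exI[of _ "[]"] exI[of _ "x # s"] exI[of _ "tl v'"]) (cases v'; auto)
    next
      case False
      have "foldr push (x # u) v = (x # c) @ v'"
      proof (cases c)
        case Nil
        with False IH show ?thesis by (cases v') auto
      next
        case (Cons y c')
        with Cons.prems IH show ?thesis by simp
      qed
      then show ?thesis using IH
        by (intro exI[of _ "x # c"] exI[of _ s] exI[of _ v']) simp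
    qed
  qed
qed

definition exp_sum_a :: "f2letter list \<Rightarrow> int" where
  "exp_sum_a w = (\<Sum>x\<leftarrow>w. if fst x then 0 else if snd x then 1 else -1)"

lemma exp_sum_a_push: "exp_sum_a (push x v) = exp_sum_a [x] + exp_sum_a v"
  by (cases v) (auto simp: exp_sum_a_def cancels_def)

lemma exp_sum_a_mult: "exp_sum_a (u \<otimes>\<^bsub>F2\<^esub> v) = exp_sum_a u + exp_sum_a v"
  unfolding F2_mult by (induction u) (simp_all add: exp_sum_a_push, simp_all add: exp_sum_a_def)

definition gen_a :: "f2letter list" where
  "gen_a = [(False, True)]"

lemma gen_a_carrier: "gen_a \<in> carrier F2"
  and inv_gen_a: "inv\<^bsub>F2\<^esub> gen_a = [(False, False)]"
proof -
  show "gen_a \<in> carrier F2" by (simp add: gen_a_def F2_carrier)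
  moreover have "[(False, False)] \<otimes>\<^bsub>F2\<^esub> gen_a = \<one>\<^bsub>F2\<^esub>"
    by (simp add: gen_a_def F2_mult F2_one cancels_def)
  ultimately show "inv\<^bsub>F2\<^esub> gen_a = [(False, False)]"
    by (simp add: group.inv_equality[OF group_F2] F2_carrier)
qed

lemma exp_sum_a_gen_a: "exp_sum_a gen_a = 1" "exp_sum_a (inv\<^bsub>F2\<^esub> gen_a) = -1"
  and exp_sum_a_Nil: "exp_sum_a [] = 0"
  by (simp_all add: inv_gen_a, simp_all add: exp_sum_a_def gen_a_def)

section \<open>Computations of G-automata\<close>

fun last_state :: "'q \<Rightarrow> ('q \<times> 's option \<times> 'q \<times> 'g) list \<Rightarrow> 'q" where
  "last_state q [] = q"
| "last_state _ ((_, _, q', _) # ts) = last_state q' ts"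

lemma last_state_append: "last_state q (xs @ ys) = last_state (last_state q xs) ys"
  by (induction q xs rule: last_state.induct) auto

lemma gpath_append: "gpath A q xs q' \<Longrightarrow> gpath A q' ys q'' \<Longrightarrow> gpath A q (xs @ ys) q''"
  by (induction rule: gpath.induct) (auto intro: gpath.step)

lemma gpath_appendD:
  "gpath A q (xs @ ys) q'' \<Longrightarrow> gpath A q xs (last_state q xs) \<and> gpath A (last_state q xs) ys q''"
proof (induction xs arbitrary: q)
  case Nil
  then show ?case by (auto intro: gpath.nil)
next
  case (Cons t xs)
  then show ?case by (cases t) (auto elim: gpath.cases intro: gpath.step)
qed

lemma gpath_subset_trans: "gpath A q ts q' \<Longrightarrow> set ts \<subseteq> trans A"
  by (induction rule: gpath.induct) auto

lemma gpath_in_states: "gpath A q ts q' \<Longrightarrow> wf_gaut G A \<Longrightarrow> q \<in> states A \<Longrightarrow> q' \<in> states A"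
  by (induction rule: gpath.induct) (auto simp: wf_gaut_def)

lemma last_state_take_in_states:
  assumes wf: "wf_gaut G A" and path: "gpath A (init A) ts f"
  shows "last_state (init A) (take r ts) \<in> states A"
proof -
  have "gpath A (init A) (take r ts) (last_state (init A) (take r ts))"
    using gpath_appendD[of A "init A" "take r ts" "drop r ts" f] path by simp
  moreover have "init A \<in> states A"
    using wf by (simp add: wf_gaut_def)
  ultimately show ?thesis
    by (rule gpath_in_states[OF _ wf])
qed

lemma gpath_replicate: "(q, s, q, m) \<in> trans A \<Longrightarrow> gpath A q (replicate n (q, s, q, m)) q"
  by (induction n) (auto intro: gpath.intros)

lemma read_word_Nil [simp]: "read_word [] = []"
  and read_word_Cons [simp]:
    "read_word ((q, s, q', m) # ts) = (case s of None \<Rightarrow> [] | Some a \<Rightarrow> [a]) @ read_word ts"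
  and read_word_append [simp]: "read_word (xs @ ys) = read_word xs @ read_word ys"
  by (simp_all add: read_word_def)

lemma length_read_word_le: "length (read_word ts) \<le> length ts"
  by (induction ts) (auto split: option.split)

definition label :: "'q \<times> 's option \<times> 'q \<times> 'g \<Rightarrow> 'g" where
  "label t = snd (snd (snd t))"

lemma label_conv [simp]: "label (q, s, q', m) = m"
  by (simp add: label_def)

lemma gpath_labels_carrier: "wf_gaut G A \<Longrightarrow> gpath A q ts q' \<Longrightarrow> label ` set ts \<subseteq> carrier G"
  by (fastforce simp: wf_gaut_def label_def dest: gpath_subset_trans)

lemma register_Nil [simp]: "register G [] = \<one>\<^bsub>G\<^esub>"
  and register_snoc [simp]: "register G (ts @ [t]) = register G ts \<otimes>\<^bsub>G\<^esub> label t"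
  by (simp_all add: register_def label_def split: prod.split)

definition pumpable :: "'s list set \<Rightarrow> 's list \<Rightarrow> bool" where
  "pumpable L w \<longleftrightarrow> (\<exists>u1 u2 u3 u4 u5. w = u1 @ u2 @ u3 @ u4 @ u5 \<and> u2 @ u4 \<noteq> []
     \<and> u1 @ u2 @ u2 @ u3 @ u4 @ u4 @ u5 \<in> L)"

context monoid
begin

lemma register_closed: "label ` set ts \<subseteq> carrier G \<Longrightarrow> register G ts \<in> carrier G"
  by (induction ts rule: rev_induct) auto

lemma register_append:
  "label ` set (xs @ ys) \<subseteq> carrier G \<Longrightarrow> register G (xs @ ys) = register G xs \<otimes> register G ys"
proof (induction ys rule: rev_induct)
  case (snoc t ys)
  then show ?case
    using register_closed[of xs] register_closed[of ys]
    by (simp add: m_assoc image_Un flip: append_assoc)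
qed (simp add: register_closed)

lemma register_Cons:
  "label ` set (t # ts) \<subseteq> carrier G \<Longrightarrow> register G (t # ts) = label t \<otimes> register G ts"
  using register_append[of "[t]" ts] register_snoc[of G "[]" t] by simp

lemma register_replicate:
  "m \<in> carrier G \<Longrightarrow> register G (replicate n (q, s, q', m)) = m [^] n"
  by (induction n) (simp_all flip: replicate_append_same)

lemma register_pump:
  assumes labels: "label ` set (t1 @ t2 @ t3 @ t4 @ t5) \<subseteq> carrier G"
    and balanced: "register G (t2 @ t3 @ t4) = register G t3"
  shows "register G (t1 @ t3 @ t5) = register G (t1 @ t2 @ t3 @ t4 @ t5)"
    and "register G (t1 @ t2 @ t2 @ t3 @ t4 @ t4 @ t5) = register G (t1 @ t2 @ t3 @ t4 @ t5)"
proof -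
  note closed = register_closed[of t1] register_closed[of t2] register_closed[of t3]
    register_closed[of t4] register_closed[of t5]
  have "register G t2 \<otimes> (register G t3 \<otimes> register G t4) = register G t3"
    using balanced labels closed by (simp add: register_append image_Un)
  then have "register G t2 \<otimes> (register G t3 \<otimes> (register G t4 \<otimes> x)) = register G t3 \<otimes> x"
    if "x \<in> carrier G" for x
    using that labels closed by (simp add: image_Un flip: m_assoc)
  then show "register G (t1 @ t3 @ t5) = register G (t1 @ t2 @ t3 @ t4 @ t5)"
    and "register G (t1 @ t2 @ t2 @ t3 @ t4 @ t4 @ t5) = register G (t1 @ t2 @ t3 @ t4 @ t5)"
    using labels closed by (simp_all add: register_append image_Un)
qed

lemma accepting_comp_pump_loops:
  assumes wf: "wf_gaut G A"
    and paths: "gpath A (init A) t1 p" "gpath A p t2 p" "gpath A p t3 p'" "gpath A p' t4 p'"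
      "gpath A p' t5 f" "f \<in> accepting A"
    and accepted: "register G (t1 @ t2 @ t3 @ t4 @ t5) = \<one>\<^bsub>G\<^esub>"
    and balanced: "register G (t2 @ t3 @ t4) = register G t3"
  shows "accepting_comp G A (read_word (t1 @ t3 @ t5)) (t1 @ t3 @ t5)"
    and "accepting_comp G A (read_word (t1 @ t2 @ t2 @ t3 @ t4 @ t4 @ t5))
           (t1 @ t2 @ t2 @ t3 @ t4 @ t4 @ t5)"
proof -
  have "gpath A (init A) (t1 @ t2 @ t3 @ t4 @ t5) f"
    using paths by (blast intro: gpath_append)
  then have "label ` set (t1 @ t2 @ t3 @ t4 @ t5) \<subseteq> carrier G"
    by (rule gpath_labels_carrier[OF wf])
  note registers = register_pump[OF this balanced]
  have "gpath A (init A) (t1 @ t3 @ t5) f"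
    and "gpath A (init A) (t1 @ t2 @ t2 @ t3 @ t4 @ t4 @ t5) f"
    using paths by (blast intro: gpath_append)+
  then show "accepting_comp G A (read_word (t1 @ t3 @ t5)) (t1 @ t3 @ t5)"
    and "accepting_comp G A (read_word (t1 @ t2 @ t2 @ t3 @ t4 @ t4 @ t5))
           (t1 @ t2 @ t2 @ t3 @ t4 @ t4 @ t5)"
    using registers accepted \<open>f \<in> accepting A\<close> by (auto simp: accepting_comp_def)
qed

end

lemma gpath_split_at_loops:
  assumes path: "gpath A q ts f"
    and positions: "i \<le> j" "j \<le> k" "k \<le> l" "l \<le> length ts"
    and loops: "last_state q (take i ts) = last_state q (take j ts)"
      "last_state q (take k ts) = last_state q (take l ts)"
  obtains t1 t2 t3 t4 t5 p p' where "ts = t1 @ t2 @ t3 @ t4 @ t5"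
    "take i ts = t1" "take j ts = t1 @ t2" "take k ts = t1 @ t2 @ t3"
    "take l ts = t1 @ t2 @ t3 @ t4"
    "gpath A q t1 p" "gpath A p t2 p" "gpath A p t3 p'" "gpath A p' t4 p'" "gpath A p' t5 f"
proof -
  define t1 where "t1 = take i ts"
  define t2 where "t2 = take (j - i) (drop i ts)"
  define t3 where "t3 = take (k - j) (drop j ts)"
  define t4 where "t4 = take (l - k) (drop k ts)"
  define t5 where "t5 = drop l ts"
  have take_j: "take j ts = t1 @ t2"
    using positions take_add[of i "j - i" ts] by (simp add: t1_def t2_def)
  have take_k: "take k ts = t1 @ t2 @ t3"
    using positions take_add[of j "k - j" ts] take_j by (simp add: t3_def)
  have take_l: "take l ts = t1 @ t2 @ t3 @ t4"
    using positions take_add[of k "l - k" ts] take_k by (simp add: t4_def)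
  have ts: "ts = t1 @ t2 @ t3 @ t4 @ t5"
    using take_l by (metis append.assoc append_take_drop_id t5_def)
  define p where "p = last_state q t1"
  define p' where "p' = last_state p t3"
  have loop_p: "last_state p t2 = p"
    using loops(1) unfolding t1_def[symmetric] take_j p_def by (simp add: last_state_append)
  have loop_p': "last_state p' t4 = p'"
    using loops(2) loop_p unfolding take_k take_l
    by (simp add: last_state_append p'_def flip: p_def)
  have path1: "gpath A q t1 p" "gpath A p (t2 @ t3 @ t4 @ t5) f"
    using gpath_appendD[of A q t1 "t2 @ t3 @ t4 @ t5" f] path by (simp_all add: ts p_def)
  then have path2: "gpath A p t2 p" "gpath A p (t3 @ t4 @ t5) f"
    using gpath_appendD[of A p t2 "t3 @ t4 @ t5" f] loop_p by simp_all
  then have path3: "gpath A p t3 p'" "gpath A p' (t4 @ t5) f"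
    using gpath_appendD[of A p t3 "t4 @ t5" f] by (simp_all add: p'_def)
  then have "gpath A p' t4 p'" "gpath A p' t5 f"
    using gpath_appendD[of A p' t4 t5 f] loop_p' by simp_all
  then show ?thesis
    by (rule that[OF ts t1_def[symmetric] take_j take_k take_l path1(1) path2(1) path3(1)])
qed

lemma (in group) register_balanced:
  assumes labels: "label ` set (t1 @ t2 @ t3 @ t4 @ t5) \<subseteq> carrier G"
    and cancel: "inv register G t1 \<otimes> register G (t1 @ t2 @ t3 @ t4)
      = inv register G (t1 @ t2) \<otimes> register G (t1 @ t2 @ t3)"
  shows "register G (t2 @ t3 @ t4) = register G t3"
proof -
  note closed = register_closed[of t1] register_closed[of t2] register_closed[of t3]
    register_closed[of t4]
  have "inv register G t1 \<otimes> (register G t1 \<otimes> register G (t2 @ t3 @ t4))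
      = inv (register G t1 \<otimes> register G t2) \<otimes> (register G t1 \<otimes> register G t2 \<otimes> register G t3)"
    using cancel labels closed by (simp add: register_append image_Un m_assoc)
  then show ?thesis
    using labels closed
    by (simp add: register_append image_Un inv_mult_group m_assoc flip: m_assoc[of "inv _"])
qed

lemma (in group) minimal_accepting_comp_pumpable:
  assumes wf: "wf_gaut G A"
    and acc: "accepting_comp G A w ts"
    and minimal: "\<And>ts'. accepting_comp G A w ts' \<Longrightarrow> length ts \<le> length ts'"
    and positions: "i \<le> j" "j \<le> k" "k \<le> l" "l \<le> length ts" "i < j \<or> k < l"
    and loops: "last_state (init A) (take i ts) = last_state (init A) (take j ts)"
      "last_state (init A) (take k ts) = last_state (init A) (take l ts)"
    and cancel: "inv\<^bsub>G\<^esub> register G (take i ts) \<otimes>\<^bsub>G\<^esub> register G (take l ts)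
      = inv\<^bsub>G\<^esub> register G (take j ts) \<otimes>\<^bsub>G\<^esub> register G (take k ts)"
  shows "pumpable (gaut_lang G A) w"
proof -
  obtain f where path: "gpath A (init A) ts f" and f: "f \<in> accepting A"
    and read: "read_word ts = w" and accepted: "register G ts = \<one>"
    using acc by (auto simp: accepting_comp_def)
  obtain t1 t2 t3 t4 t5 p p' where ts: "ts = t1 @ t2 @ t3 @ t4 @ t5"
    and takes: "take i ts = t1" "take j ts = t1 @ t2" "take k ts = t1 @ t2 @ t3"
      "take l ts = t1 @ t2 @ t3 @ t4"
    and paths: "gpath A (init A) t1 p" "gpath A p t2 p" "gpath A p t3 p'" "gpath A p' t4 p'"
      "gpath A p' t5 f"
    using gpath_split_at_loops[OF path positions(1-4) loops] by blast
  have "label ` set (t1 @ t2 @ t3 @ t4 @ t5) \<subseteq> carrier G"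
    using gpath_labels_carrier[OF wf path] ts by simp
  then have balanced: "register G (t2 @ t3 @ t4) = register G t3"
    using cancel unfolding takes by (rule register_balanced)
  show ?thesis
  proof (cases "read_word t2 @ read_word t4 = []")
    case True
    have "accepting_comp G A w (t1 @ t3 @ t5)"
      using accepting_comp_pump_loops(1)[OF wf paths f _ balanced] accepted read True
      unfolding ts by simp
    then have "length ts \<le> length (t1 @ t3 @ t5)"
      by (rule minimal)
    moreover have "length t2 = j - i" "length t4 = l - k"
      using positions arg_cong[OF takes(1), of length] arg_cong[OF takes(2), of length]
        arg_cong[OF takes(3), of length] arg_cong[OF takes(4), of length]
      by simp_all
    ultimately have "(j - i) + (l - k) = 0"
      unfolding ts by simp
    then show ?thesis
      using positions by linarith
  next
    case False
    have "accepting_comp G A (read_word (t1 @ t2 @ t2 @ t3 @ t4 @ t4 @ t5))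
        (t1 @ t2 @ t2 @ t3 @ t4 @ t4 @ t5)"
      using accepting_comp_pump_loops(2)[OF wf paths f _ balanced] accepted
      unfolding ts by simp
    then have "read_word t1 @ read_word t2 @ read_word t2 @ read_word t3 @ read_word t4
        @ read_word t4 @ read_word t5 \<in> gaut_lang G A"
      by (auto simp: gaut_lang_def)
    moreover have "w = read_word t1 @ read_word t2 @ read_word t3 @ read_word t4 @ read_word t5"
      using read by (simp add: ts)
    ultimately show ?thesis
      using False unfolding pumpable_def by blast
  qed
qed

section \<open>Irredundant stack runs are short\<close>

lemma consecutive_gaps_bound:
  fixes L :: "nat set"
  assumes "finite L" "s \<in> L" "t \<in> L" "s \<le> t"
    and gap: "\<And>a b. a \<in> L \<Longrightarrow> b \<in> L \<Longrightarrow> a < b \<Longrightarrow> {a<..<b} \<inter> L = {} \<Longrightarrow> b - a \<le> B"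
  shows "t - s \<le> card (L \<inter> {s..<t}) * B"
  using assms(3,4)
proof (induction t rule: less_induct)
  case (less t)
  show ?case
  proof (cases "s = t")
    case False
    define a where "a = Max (L \<inter> {s..<t})"
    have nonempty: "s \<in> L \<inter> {s..<t}"
      using False less.prems assms(2) by auto
    have "a \<in> L \<inter> {s..<t}"
      unfolding a_def using nonempty assms(1) by (intro Max_in) auto
    then have a: "a \<in> L" "s \<le> a" "a < t"
      by auto
    have a_max: "r \<le> a" if "r \<in> L" "s \<le> r" "r < t" for r
      using Max_ge[of "L \<inter> {s..<t}" r] assms(1) that by (simp add: a_def)
    then have "{a<..<t} \<inter> L = {}"
      using a by fastforce
    then have "t - a \<le> B"
      using gap a less.prems by blast
    moreover have "a - s \<le> card (L \<inter> {s..<a}) * B"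
      using less.IH a by blast
    moreover have "L \<inter> {s..<t} = insert a (L \<inter> {s..<a})"
      using a a_max by fastforce
    then have "card (L \<inter> {s..<t}) = Suc (card (L \<inter> {s..<a}))"
      using assms(1) by simp
    ultimately show ?thesis
      using a by simp
  qed simp
qed

lemma prefix_append_drop: "prefix P xs \<Longrightarrow> xs = P @ drop (length P) xs"
  by (auto elim: prefixE)

definition short_words :: "nat \<Rightarrow> 'a list set" where
  "short_words K = {w. length w \<le> K}"

lemma finite_short_words: "finite (short_words K :: 'a::finite list set)"
  using finite_lists_length_le[of "UNIV :: 'a set" K] by (simp add: short_words_def)

definition rooted_segment :: "nat \<Rightarrow> (nat \<Rightarrow> 'a list) \<Rightarrow> nat \<Rightarrow> nat \<Rightarrow> nat \<Rightarrow> 'a list \<Rightarrow> bool" where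
  "rooted_segment T x K s t P \<longleftrightarrow> s \<le> t \<and> t \<le> T \<and> (\<forall>r\<in>{s..t}. prefix P (x r))
     \<and> length (x s) \<le> length P + K \<and> length (x t) \<le> length P + K"

definition segment_profile ::
    "(nat \<Rightarrow> 'q) \<Rightarrow> (nat \<Rightarrow> 'a list) \<Rightarrow> nat \<Rightarrow> nat \<Rightarrow> 'a list \<Rightarrow> 'q \<times> 'a list \<times> 'q \<times> 'a list" where
  "segment_profile q x s t P = (q s, drop (length P) (x s), q t, drop (length P) (x t))"

fun nesting_bound :: "nat \<Rightarrow> nat \<Rightarrow> nat" where
  "nesting_bound N 0 = 0"
| "nesting_bound N (Suc m) = N * (1 + nesting_bound N m)"

locale irredundant_stack_run =
  fixes T :: nat and q :: "nat \<Rightarrow> 'q" and x :: "nat \<Rightarrow> 'a::finite list"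
    and K :: nat and Q :: "'q set"
  assumes finite_Q: "finite Q"
    and q_in_Q: "\<And>r. r \<le> T \<Longrightarrow> q r \<in> Q"
    and stack_step: "\<And>r. r < T \<Longrightarrow>
      \<exists>c s s'. x r = c @ s \<and> x (Suc r) = c @ s' \<and> length s \<le> K \<and> length s' \<le> K"
    and distinct_configs: "\<And>i j. i < j \<Longrightarrow> j \<le> T \<Longrightarrow> q i = q j \<Longrightarrow> x i \<noteq> x j"
    and distinct_profiles: "\<And>s t P s' t' P'. rooted_segment T x K s t P \<Longrightarrow>
      rooted_segment T x K s' t' P' \<Longrightarrow> s \<le> s' \<Longrightarrow> t' \<le> t \<Longrightarrow> P \<noteq> P' \<Longrightarrow>
      segment_profile q x s t P \<noteq> segment_profile q x s' t' P'"
begin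

abbreviation configs :: "('q \<times> 'a list) set" where
  "configs \<equiv> Q \<times> short_words K"

abbreviation profiles :: "('q \<times> 'a list \<times> 'q \<times> 'a list) set" where
  "profiles \<equiv> Q \<times> short_words K \<times> Q \<times> short_words K"

lemma finite_configs: "finite configs"
  and finite_profiles: "finite profiles"
  by (simp_all add: finite_Q finite_short_words finite_cartesian_product)

lemma segment_profile_in_profiles:
  "rooted_segment T x K s t P \<Longrightarrow> segment_profile q x s t P \<in> profiles"
  using q_in_Q by (auto simp: rooted_segment_def segment_profile_def short_words_def)

lemma take_stack_step:
  assumes "r < T" "n + K \<le> length (x r) \<or> n + K \<le> length (x (Suc r))"
  shows "take n (x (Suc r)) = take n (x r) \<and> n \<le> length (x (Suc r))"
proof -
  obtain c s s' where "x r = c @ s" "x (Suc r) = c @ s'" "length s \<le> K" "length s' \<le> K"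
    using stack_step[OF assms(1)] by blast
  with assms(2) show ?thesis by auto
qed

lemma card_low_points:
  assumes "rooted_segment T x K s t P"
  shows "card {r \<in> {s..t}. length (x r) \<le> length P + K} \<le> card configs"
proof -
  let ?L = "{r \<in> {s..t}. length (x r) \<le> length P + K}"
  let ?f = "\<lambda>r. (q r, drop (length P) (x r))"
  have "x r = P @ drop (length P) (x r)" if "r \<in> ?L" for r
    using assms that by (auto simp: rooted_segment_def intro: prefix_append_drop)
  then have inj: "inj_on ?f ?L"
    using distinct_configs assms
    by (intro inj_onI) (metis (no_types, lifting) rooted_segment_def linorder_neqE_nat
        mem_Collect_eq atLeastAtMost_iff order.trans prod.inject)
  have "?f ` ?L \<subseteq> configs"
    using assms q_in_Q by (auto simp: rooted_segment_def short_words_def)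
  then have "card (?f ` ?L) \<le> card configs"
    by (rule card_mono[OF finite_configs])
  then show ?thesis
    by (simp only: card_image[OF inj])
qed

lemma rooted_segment_between_low_points:
  assumes rooted: "rooted_segment T x K s t P"
    and range: "s \<le> r0" "r \<le> t" "Suc r0 < r"
    and low: "length (x r0) \<le> length P + K" "length (x r) \<le> length P + K"
    and high: "\<And>r'. r0 < r' \<Longrightarrow> r' < r \<Longrightarrow> length P + K < length (x r')"
  defines "P' \<equiv> take (Suc (length P)) (x (Suc r0))"
  shows "rooted_segment T x K r0 r P'" and "strict_prefix P P'"
proof -
  let ?n = "Suc (length P)"
  have "r \<le> T"
    using rooted range by (simp add: rooted_segment_def)
  have take_step: "take ?n (x (Suc r')) = take ?n (x r') \<and> ?n \<le> length (x (Suc r'))"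
    if "r0 \<le> r'" "r' < r" for r'
    using take_stack_step[of r' ?n] high[of r'] high[of "Suc r'"] that range \<open>r \<le> T\<close>
    by (cases "r' = r0") auto
  have const: "take ?n (x r') = P'" if "r0 \<le> r'" "r' \<le> r" for r'
    using that(1)
  proof (induction r' rule: dec_induct)
    case base
    then show ?case using take_step[of r0] range by (simp add: P'_def)
  next
    case (step m)
    then show ?case using take_step[of m] that(2) by simp
  qed
  have "?n \<le> length (x (Suc r0))"
    using take_step[of r0] range by simp
  then have length_P': "length P' = ?n"
    by (simp add: P'_def)
  show "rooted_segment T x K r0 r P'"
    unfolding rooted_segment_def
    using const[symmetric] length_P' low range rooted \<open>r \<le> T\<close>
    by (auto simp: rooted_segment_def take_is_prefix)
  have "prefix P (x (Suc r0))"
    using rooted range by (simp add: rooted_segment_def)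
  then have "prefix P P'"
    using length_P' by (auto simp: P'_def intro: prefix_length_prefix take_is_prefix)
  then show "strict_prefix P P'"
    using length_P' by (auto simp: strict_prefix_def)
qed

lemma nested_segment_profile_notin:
  assumes rooted: "rooted_segment T x K s t P"
    and excluded: "\<And>s' t' P'. rooted_segment T x K s' t' P' \<Longrightarrow> s \<le> s' \<Longrightarrow> t' \<le> t \<Longrightarrow>
      prefix P P' \<Longrightarrow> segment_profile q x s' t' P' \<notin> S"
    and inside: "s \<le> a" "b \<le> t" and "strict_prefix P P'"
    and nested: "rooted_segment T x K s' t' P''" "a \<le> s'" "t' \<le> b" "prefix P' P''"
  shows "segment_profile q x s' t' P'' \<notin> insert (segment_profile q x s t P) S"
proof -
  have "strict_prefix P P''"
    using \<open>strict_prefix P P'\<close> \<open>prefix P' P''\<close> by (rule prefix_order.less_le_trans)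
  then have "prefix P P''" "P \<noteq> P''"
    by (simp_all add: strict_prefix_def)
  moreover have "s \<le> s'" "t' \<le> t"
    using inside nested by simp_all
  ultimately show ?thesis
    using excluded[OF nested(1)] distinct_profiles[OF rooted nested(1)] by auto
qed

lemma rooted_segment_length_bound:
  assumes "rooted_segment T x K s t P"
    and "\<And>s' t' P'. rooted_segment T x K s' t' P' \<Longrightarrow> s \<le> s' \<Longrightarrow> t' \<le> t \<Longrightarrow> prefix P P' \<Longrightarrow>
      segment_profile q x s' t' P' \<notin> S"
    and "card (profiles - S) \<le> m"
  shows "t - s \<le> nesting_bound (card configs) m"
  using assms
proof (induction m arbitrary: s t P S)
  case 0
  have "segment_profile q x s t P \<in> profiles - S"
    using 0 segment_profile_in_profiles by blast
  then show ?case
    using 0 finite_profiles by (metis card_0_eq empty_iff finite_Diff le_zero_eq)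
next
  case (Suc m)
  let ?\<pi> = "segment_profile q x s t P"
  let ?B = "1 + nesting_bound (card configs) m"
  have \<pi>: "?\<pi> \<in> profiles - S"
    using Suc.prems segment_profile_in_profiles by blast
  define L where "L = {r \<in> {s..t}. length (x r) \<le> length P + K}"
  \<comment> \<open>Between consecutive low points the run either takes a single step or forms a child
    segment above a longer prefix, whose nested profiles avoid both \<open>S\<close> and \<open>?\<pi>\<close>.\<close>
  have gap: "b - a \<le> ?B" if "a \<in> L" "b \<in> L" "a < b" "{a<..<b} \<inter> L = {}" for a b
  proof (cases "b = Suc a")
    case False
    define P' where "P' = take (Suc (length P)) (x (Suc a))"
    have high: "length P + K < length (x r')" if "a < r'" "r' < b" for r'
      using \<open>{a<..<b} \<inter> L = {}\<close> \<open>a \<in> L\<close> \<open>b \<in> L\<close> that by (auto simp: L_def)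
    have child: "rooted_segment T x K a b P'" "strict_prefix P P'"
      using rooted_segment_between_low_points[OF Suc.prems(1) _ _ _ _ _ high] that False
      by (auto simp: L_def P'_def)
    have "s \<le> a" "b \<le> t"
      using \<open>a \<in> L\<close> \<open>b \<in> L\<close> by (auto simp: L_def)
    note nested = nested_segment_profile_notin[OF Suc.prems(1,2) this child(2)]
    have "card (profiles - insert ?\<pi> S) \<le> m"
      using \<pi> Suc.prems(3) by (simp add: card_Diff_insert)
    then have "b - a \<le> nesting_bound (card configs) m"
      using Suc.IH[OF child(1)] nested by blast
    then show ?thesis by simp
  qed simp
  have "finite L" "s \<in> L" "t \<in> L" "s \<le> t"
    using Suc.prems(1) by (auto simp: L_def rooted_segment_def)
  then have "t - s \<le> card (L \<inter> {s..<t}) * ?B"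
    using gap by (rule consecutive_gaps_bound)
  also have "\<dots> \<le> card configs * ?B"
  proof (rule mult_right_mono)
    show "card (L \<inter> {s..<t}) \<le> card configs"
      using card_low_points[OF Suc.prems(1)] card_mono[OF \<open>finite L\<close>, of "L \<inter> {s..<t}"]
      by (simp add: L_def)
  qed simp
  finally show ?case by simp
qed

theorem run_length_bound:
  assumes "x 0 = []" "x T = []"
  shows "T \<le> nesting_bound (card configs) (card profiles)"
  using rooted_segment_length_bound[of 0 T "[]" "{}"] assms
  by (simp add: rooted_segment_def)

end

section \<open>Minimal computations of F2-automata\<close>

lemma F2_inv_mult_common_prefix:
  assumes "freely_reduced (P @ u)" "freely_reduced (P @ v)"
  shows "inv\<^bsub>F2\<^esub> (P @ u) \<otimes>\<^bsub>F2\<^esub> (P @ v) = inv\<^bsub>F2\<^esub> u \<otimes>\<^bsub>F2\<^esub> v"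
proof -
  interpret group F2 by (rule group_F2)
  have "P \<in> carrier F2" "u \<in> carrier F2" "v \<in> carrier F2"
    using F2_mult_reduced_append assms by blast+
  then have "inv\<^bsub>F2\<^esub> (P \<otimes>\<^bsub>F2\<^esub> u) \<otimes>\<^bsub>F2\<^esub> (P \<otimes>\<^bsub>F2\<^esub> v)
      = inv\<^bsub>F2\<^esub> u \<otimes>\<^bsub>F2\<^esub> (inv\<^bsub>F2\<^esub> P \<otimes>\<^bsub>F2\<^esub> (P \<otimes>\<^bsub>F2\<^esub> v))"
    by (simp add: inv_mult_group m_assoc)
  also have "inv\<^bsub>F2\<^esub> P \<otimes>\<^bsub>F2\<^esub> (P \<otimes>\<^bsub>F2\<^esub> v) = v"
    using \<open>P \<in> carrier F2\<close> \<open>v \<in> carrier F2\<close> by (simp flip: m_assoc)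
  finally show ?thesis
    using F2_mult_reduced_append(1)[OF assms(1)] F2_mult_reduced_append(1)[OF assms(2)] by simp
qed

lemma F2_register_take_closed:
  assumes wf: "wf_gaut F2 A" and path: "gpath A q ts q'"
  shows "register F2 (take r ts) \<in> carrier F2"
proof -
  have "label ` set (take r ts) \<subseteq> carrier F2"
    using gpath_labels_carrier[OF wf path] by (meson image_mono order_trans set_take_subset)
  then show ?thesis
    by (rule monoid.register_closed[OF group.is_monoid[OF group_F2]])
qed

lemma F2_register_stack_step:
  assumes wf: "wf_gaut F2 A" and path: "gpath A q ts q'" and r: "r < length ts"
    and K: "\<And>t. t \<in> trans A \<Longrightarrow> length (label t) \<le> K"
  shows "\<exists>c s s'. register F2 (take r ts) = c @ s \<and> register F2 (take (Suc r) ts) = c @ s'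
    \<and> length s \<le> K \<and> length s' \<le> K"
proof -
  obtain c s s' where "register F2 (take r ts) = c @ s"
    "register F2 (take r ts) \<otimes>\<^bsub>F2\<^esub> label (ts ! r) = c @ s'"
    "length s + length s' \<le> length (label (ts ! r))"
    using F2_mult_common_prefix[OF F2_register_take_closed[OF wf path]] by blast
  moreover have "length (label (ts ! r)) \<le> K"
    using K[of "ts ! r"] gpath_subset_trans[OF path] r nth_mem by blast
  ultimately show ?thesis
    using r by (intro exI[of _ c] exI[of _ s] exI[of _ s']) (auto simp: take_Suc_conv_app_nth)
qed

lemma F2_rooted_segments_same_profile:
  assumes reduced: "\<And>r. freely_reduced (X r)"
    and rooted: "rooted_segment T X K s t P" "rooted_segment T X K s' t' P'"
    and same: "segment_profile q X s t P = segment_profile q X s' t' P'"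
  shows "inv\<^bsub>F2\<^esub> X s \<otimes>\<^bsub>F2\<^esub> X t = inv\<^bsub>F2\<^esub> X s' \<otimes>\<^bsub>F2\<^esub> X t'"
    and "s = s' \<Longrightarrow> P = P'"
proof -
  define u where "u = drop (length P) (X s)"
  define v where "v = drop (length P) (X t)"
  have "prefix P (X s)" "prefix P (X t)" "prefix P' (X s')" "prefix P' (X t')"
    using rooted by (simp_all add: rooted_segment_def)
  moreover have "drop (length P') (X s') = u" "drop (length P') (X t') = v"
    using same by (simp_all add: u_def v_def segment_profile_def)
  ultimately have stacks: "X s = P @ u" "X t = P @ v" "X s' = P' @ u" "X t' = P' @ v"
    unfolding u_def v_def by (metis prefix_append_drop)+
  then show "inv\<^bsub>F2\<^esub> X s \<otimes>\<^bsub>F2\<^esub> X t = inv\<^bsub>F2\<^esub> X s' \<otimes>\<^bsub>F2\<^esub> X t'"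
    using reduced by (metis F2_inv_mult_common_prefix)
  show "s = s' \<Longrightarrow> P = P'"
    using stacks by simp
qed

lemma F2_minimal_unpumpable_comp_irredundant:
  fixes A :: "('q, 's, f2letter list) gautomaton"
  assumes wf: "wf_gaut F2 A" and acc: "accepting_comp F2 A w ts"
    and minimal: "\<And>ts'. accepting_comp F2 A w ts' \<Longrightarrow> length ts \<le> length ts'"
    and unpumpable: "\<not> pumpable (gaut_lang F2 A) w"
    and K: "\<And>t. t \<in> trans A \<Longrightarrow> length (label t) \<le> K"
  shows "irredundant_stack_run (length ts) (\<lambda>r. last_state (init A) (take r ts))
    (\<lambda>r. register F2 (take r ts)) K (states A)"
proof -
  let ?q = "\<lambda>r. last_state (init A) (take r ts)"
  let ?X = "\<lambda>r. register F2 (take r ts)"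
  obtain f where path: "gpath A (init A) ts f"
    using acc by (auto simp: accepting_comp_def)
  have reduced: "freely_reduced (?X r)" for r
    using F2_register_take_closed[OF wf path] by (simp add: F2_carrier)
  have no_loop_pair: False
    if "i \<le> j" "j \<le> k" "k \<le> l" "l \<le> length ts" "i < j \<or> k < l" "?q i = ?q j" "?q k = ?q l"
      "inv\<^bsub>F2\<^esub> ?X i \<otimes>\<^bsub>F2\<^esub> ?X l = inv\<^bsub>F2\<^esub> ?X j \<otimes>\<^bsub>F2\<^esub> ?X k" for i j k l
    using group.minimal_accepting_comp_pumpable[OF group_F2 wf acc minimal that] unpumpable by blast
  show ?thesis
  proof
    show "finite (states A)"
      using wf by (simp add: wf_gaut_def)
  next
    show "?q r \<in> states A" for r
      by (rule last_state_take_in_states[OF wf path])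
  next
    fix r
    assume "r < length ts"
    then show "\<exists>c s s'. ?X r = c @ s \<and> ?X (Suc r) = c @ s' \<and> length s \<le> K \<and> length s' \<le> K"
      by (rule F2_register_stack_step[OF wf path _ K])
  next
    fix i j
    assume "i < j" "j \<le> length ts" "?q i = ?q j"
    then show "?X i \<noteq> ?X j"
      using no_loop_pair[of i j j j] by auto
  next
    fix s t P s' t' P'
    assume rooted: "rooted_segment (length ts) ?X K s t P"
        "rooted_segment (length ts) ?X K s' t' P'"
      and nested: "s \<le> s'" "t' \<le> t" and "P \<noteq> P'"
    show "segment_profile ?q ?X s t P \<noteq> segment_profile ?q ?X s' t' P'"
    proof
      assume same: "segment_profile ?q ?X s t P = segment_profile ?q ?X s' t' P'"
      then have "s < s' \<or> t' < t"
        using F2_rooted_segments_same_profile(2)[OF reduced rooted] nested \<open>P \<noteq> P'\<close>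
        by fastforce
      then show False
        using no_loop_pair[of s s' t' t] F2_rooted_segments_same_profile(1)[OF reduced rooted same]
          nested rooted same
        by (auto simp: rooted_segment_def segment_profile_def)
    qed
  qed
qed

lemma F2_minimal_unpumpable_comp_bounded:
  fixes A :: "('q, 's, f2letter list) gautomaton"
  assumes wf: "wf_gaut F2 A"
  obtains B where "\<And>w ts. accepting_comp F2 A w ts \<Longrightarrow>
    (\<And>ts'. accepting_comp F2 A w ts' \<Longrightarrow> length ts \<le> length ts') \<Longrightarrow>
    \<not> pumpable (gaut_lang F2 A) w \<Longrightarrow> length ts \<le> B"
proof
  define K where "K = Max (insert 0 ((\<lambda>t. length (label t)) ` trans A))"
  have K: "length (label t) \<le> K" if "t \<in> trans A" for t
    using wf that by (auto simp: K_def wf_gaut_def)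
  fix w ts
  assume acc: "accepting_comp F2 A w ts"
    and "\<And>ts'. accepting_comp F2 A w ts' \<Longrightarrow> length ts \<le> length ts'"
    and "\<not> pumpable (gaut_lang F2 A) w"
  then interpret irredundant_stack_run "length ts" "\<lambda>r. last_state (init A) (take r ts)"
    "\<lambda>r. register F2 (take r ts)" K "states A"
    using K by (rule F2_minimal_unpumpable_comp_irredundant[OF wf])
  have "register F2 (take (length ts) ts) = []"
    using acc by (auto simp: accepting_comp_def F2_one)
  then show "length ts \<le> nesting_bound (card configs) (card profiles)"
    using run_length_bound by (simp add: F2_one)
qed

section \<open>The language \<open>{0\<^sup>n 1\<^sup>n 2\<^sup>n}\<close>\<close>

lemma count_list_replicate: "count_list (replicate n y) x = (if y = x then n else 0)"
  by (induction n) auto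

definition abc_lang :: "nat list set" where
  "abc_lang = {replicate n 0 @ replicate n 1 @ replicate n 2 | n. True}"

lemma abc_lang_iff:
  "w \<in> abc_lang \<longleftrightarrow> sorted w \<and> set w \<subseteq> {0, 1, 2}
     \<and> count_list w 0 = count_list w 1 \<and> count_list w 1 = count_list w 2"
proof
  assume "w \<in> abc_lang"
  then show "sorted w \<and> set w \<subseteq> {0, 1, 2}
     \<and> count_list w 0 = count_list w 1 \<and> count_list w 1 = count_list w 2"
    by (auto simp: abc_lang_def sorted_append count_list_replicate)
next
  assume w: "sorted w \<and> set w \<subseteq> {0, 1, 2}
     \<and> count_list w 0 = count_list w 1 \<and> count_list w 1 = count_list w 2"
  define n where "n = count_list w 0"
  have "mset (replicate n 0 @ replicate n 1 @ replicate n 2) = mset w"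
  proof (rule multiset_eqI)
    fix c :: nat
    show "count (mset (replicate n 0 @ replicate n 1 @ replicate n 2)) c = count (mset w) c"
      using w by (cases "c \<in> {0, 1, 2}")
        (auto simp: n_def count_mset count_list_replicate count_list_0_iff)
  qed
  then have "w = replicate n 0 @ replicate n 1 @ replicate n 2"
    using w properties_for_sort[of w "replicate n 0 @ replicate n 1 @ replicate n 2"]
    by (simp add: sorted_append sorted_sort_id)
  then show "w \<in> abc_lang"
    by (auto simp: abc_lang_def)
qed

lemma abc_lang_count_eq:
  "w \<in> abc_lang \<Longrightarrow> e \<in> {0, 1, 2} \<Longrightarrow> count_list w e = count_list w 0"
  by (auto simp: abc_lang_iff)

lemma sorted_append_self_const: "sorted (u @ u) \<Longrightarrow> \<exists>c. set u \<subseteq> {c}"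
proof (cases u)
  case (Cons a u')
  assume "sorted (u @ u)"
  then have "y = a" if "y \<in> set u" for y
    using that Cons by (auto simp: sorted_append intro: order.antisym)
  then show ?thesis by blast
qed simp

lemma abc_lang_not_pumpable:
  assumes w: "w \<in> abc_lang"
  shows "\<not> pumpable abc_lang w"
proof
  assume "pumpable abc_lang w"
  then obtain u1 u2 u3 u4 u5 where decomp: "w = u1 @ u2 @ u3 @ u4 @ u5" and "u2 @ u4 \<noteq> []"
    and pumped: "u1 @ u2 @ u2 @ u3 @ u4 @ u4 @ u5 \<in> abc_lang" (is "?w' \<in> _")
    by (auto simp: pumpable_def)
  have count_w': "count_list ?w' e = count_list w e + count_list u2 e + count_list u4 e" for e
    by (simp add: decomp)
  have "sorted (u2 @ u2)" "sorted (u4 @ u4)"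
    using pumped by (simp_all add: abc_lang_iff sorted_append)
  then obtain c2 c4 where "set u2 \<subseteq> {c2}" "set u4 \<subseteq> {c4}"
    using sorted_append_self_const by meson
  moreover have "\<exists>e0 :: nat. e0 \<le> 2 \<and> e0 \<noteq> c2 \<and> e0 \<noteq> c4"
    by presburger
  then obtain e0 :: nat where "e0 \<le> 2" "e0 \<noteq> c2" "e0 \<noteq> c4"
    by blast
  ultimately have "count_list ?w' e0 = count_list w e0"
    unfolding count_w' by (auto simp: count_list_0_iff)
  then have same_count: "count_list ?w' 0 = count_list w 0"
    using abc_lang_count_eq[OF w, of e0] abc_lang_count_eq[OF pumped, of e0] \<open>e0 \<le> 2\<close>
    by (auto simp: le_Suc_eq numeral_2_eq_2)
  obtain e1 where e1: "e1 \<in> set (u2 @ u4)"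
    using \<open>u2 @ u4 \<noteq> []\<close> by (meson list.set_sel(1))
  then have "count_list u2 e1 + count_list u4 e1 \<noteq> 0"
    using count_list_0_iff[of "u2 @ u4" e1] by simp
  moreover have "e1 \<in> {0, 1, 2}"
    using w e1 by (auto simp: abc_lang_iff decomp)
  ultimately show False
    using abc_lang_count_eq[OF w, of e1] abc_lang_count_eq[OF pumped, of e1] same_count
      count_w'[of e1] by linarith
qed

theorem abc_lang_not_F2_lang:
  fixes A :: "('q, nat, f2letter list) gautomaton"
  assumes wf: "wf_gaut F2 A"
  shows "gaut_lang F2 A \<noteq> abc_lang"
proof
  assume lang: "gaut_lang F2 A = abc_lang"
  obtain B where bound: "\<And>w ts. accepting_comp F2 A w ts \<Longrightarrow>
      (\<And>ts'. accepting_comp F2 A w ts' \<Longrightarrow> length ts \<le> length ts') \<Longrightarrow>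
      \<not> pumpable (gaut_lang F2 A) w \<Longrightarrow> length ts \<le> B"
    using F2_minimal_unpumpable_comp_bounded[OF wf] by blast
  define w :: "nat list" where "w = replicate (Suc B) 0 @ replicate (Suc B) 1 @ replicate (Suc B) 2"
  have "w \<in> abc_lang"
    unfolding abc_lang_def w_def by blast
  then obtain ts0 where "accepting_comp F2 A w ts0"
    using lang by (auto simp: gaut_lang_def)
  then obtain ts where acc: "accepting_comp F2 A w ts"
    and minimal: "\<And>ts'. accepting_comp F2 A w ts' \<Longrightarrow> length ts \<le> length ts'"
    using ex_has_least_nat[of "accepting_comp F2 A w" ts0 length] by blast
  have "length ts \<le> B"
    using bound[OF acc minimal] abc_lang_not_pumpable[OF \<open>w \<in> abc_lang\<close>] lang by simp
  moreover have "length w \<le> length ts"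
    using acc length_read_word_le by (auto simp: accepting_comp_def)
  ultimately show False
    by (simp add: w_def)
qed

section \<open>Recognition by F2 \<times> F2-automata\<close>

definition abc_automaton :: "(nat, nat, f2letter list \<times> f2letter list) gautomaton" where
  "abc_automaton = \<lparr>states = {0, 1, 2}, alphabet = {0, 1, 2}, init = 0, accepting = {2},
     trans = {(0, Some 0, 0, (gen_a, \<one>\<^bsub>F2\<^esub>)),
              (0, None, 1, \<one>\<^bsub>F2 \<times>\<times> F2\<^esub>),
              (1, Some 1, 1, (inv\<^bsub>F2\<^esub> gen_a, gen_a)),
              (1, None, 2, \<one>\<^bsub>F2 \<times>\<times> F2\<^esub>),
              (2, Some 2, 2, (\<one>\<^bsub>F2\<^esub>, inv\<^bsub>F2\<^esub> gen_a))}\<rparr>"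

lemma wf_abc_automaton: "wf_gaut (F2 \<times>\<times> F2) abc_automaton"
  using gen_a_carrier group.inv_closed[OF group_F2 gen_a_carrier]
    monoid.one_closed[OF group.is_monoid[OF group_F2]]
  by (auto simp: wf_gaut_def abc_automaton_def)

lemma abc_automaton_exp_sums:
  "set ts \<subseteq> trans abc_automaton \<Longrightarrow>
    exp_sum_a (fst (register (F2 \<times>\<times> F2) ts))
      = int (count_list (read_word ts) 0) - int (count_list (read_word ts) 1) \<and>
    exp_sum_a (snd (register (F2 \<times>\<times> F2) ts))
      = int (count_list (read_word ts) 1) - int (count_list (read_word ts) 2)"
  by (induction ts rule: rev_induct)
    (auto simp: abc_automaton_def mult_DirProd' exp_sum_a_mult exp_sum_a_gen_a exp_sum_a_Nil F2_one)

lemma abc_automaton_reads_sorted: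
  "gpath abc_automaton q ts q' \<Longrightarrow> sorted (read_word ts) \<and> (\<forall>c\<in>set (read_word ts). q \<le> c \<and> c \<le> 2)"
  by (induction rule: gpath.induct) (auto simp: abc_automaton_def)

lemma abc_automaton_lang_subset: "gaut_lang (F2 \<times>\<times> F2) abc_automaton \<subseteq> abc_lang"
proof
  fix w
  assume "w \<in> gaut_lang (F2 \<times>\<times> F2) abc_automaton"
  then obtain ts f where path: "gpath abc_automaton 0 ts f" and read: "read_word ts = w"
    and accepted: "register (F2 \<times>\<times> F2) ts = ([], [])"
    by (auto simp: gaut_lang_def accepting_comp_def abc_automaton_def F2_one)
  have "sorted w" "set w \<subseteq> {0, 1, 2}"
    using abc_automaton_reads_sorted[OF path] read by auto
  moreover have "count_list w 0 = count_list w 1" "count_list w 1 = count_list w 2"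
    using abc_automaton_exp_sums[OF gpath_subset_trans[OF path]] accepted read
    by (simp_all add: exp_sum_a_Nil)
  ultimately show "w \<in> abc_lang"
    by (simp add: abc_lang_iff)
qed

lemma DirProd_nat_pow: "(x, y) [^]\<^bsub>G \<times>\<times> H\<^esub> (n::nat) = (x [^]\<^bsub>G\<^esub> n, y [^]\<^bsub>H\<^esub> n)"
  by (induction n) simp_all

lemma read_word_replicate: "read_word (replicate n (q, Some c, q', m)) = replicate n c"
  by (induction n) simp_all

definition abc_comp :: "nat \<Rightarrow> (nat \<times> nat option \<times> nat \<times> f2letter list \<times> f2letter list) list" where
  "abc_comp n = replicate n (0, Some 0, 0, (gen_a, \<one>\<^bsub>F2\<^esub>)) @ [(0, None, 1, \<one>\<^bsub>F2 \<times>\<times> F2\<^esub>)]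
     @ replicate n (1, Some 1, 1, (inv\<^bsub>F2\<^esub> gen_a, gen_a)) @ [(1, None, 2, \<one>\<^bsub>F2 \<times>\<times> F2\<^esub>)]
     @ replicate n (2, Some 2, 2, (\<one>\<^bsub>F2\<^esub>, inv\<^bsub>F2\<^esub> gen_a))"

lemma abc_comp_accepting:
  "accepting_comp (F2 \<times>\<times> F2) abc_automaton (replicate n 0 @ replicate n 1 @ replicate n 2)
    (abc_comp n)"
proof -
  interpret F2: group F2 by (rule group_F2)
  interpret F2xF2: group "F2 \<times>\<times> F2" by (rule DirProd_group[OF group_F2 group_F2])
  have "gpath abc_automaton 0 (replicate n (0, Some 0, 0, (gen_a, \<one>\<^bsub>F2\<^esub>))) 0"
    "gpath abc_automaton 0 [(0, None, 1, \<one>\<^bsub>F2 \<times>\<times> F2\<^esub>)] 1"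
    "gpath abc_automaton 1 (replicate n (1, Some 1, 1, (inv\<^bsub>F2\<^esub> gen_a, gen_a))) 1"
    "gpath abc_automaton 1 [(1, None, 2, \<one>\<^bsub>F2 \<times>\<times> F2\<^esub>)] 2"
    "gpath abc_automaton 2 (replicate n (2, Some 2, 2, (\<one>\<^bsub>F2\<^esub>, inv\<^bsub>F2\<^esub> gen_a))) 2"
    by (auto simp: abc_automaton_def intro!: gpath_replicate gpath.step gpath.nil)
  then have path: "gpath abc_automaton 0 (abc_comp n) 2"
    unfolding abc_comp_def by (blast intro: gpath_append)
  have "register (F2 \<times>\<times> F2) (abc_comp n)
      = (gen_a [^]\<^bsub>F2\<^esub> n \<otimes>\<^bsub>F2\<^esub> inv\<^bsub>F2\<^esub> gen_a [^]\<^bsub>F2\<^esub> n,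
         gen_a [^]\<^bsub>F2\<^esub> n \<otimes>\<^bsub>F2\<^esub> inv\<^bsub>F2\<^esub> gen_a [^]\<^bsub>F2\<^esub> n)"
    using gen_a_carrier
    by (simp add: abc_comp_def F2xF2.register_append F2xF2.register_Cons F2xF2.register_replicate
        DirProd_nat_pow image_Un set_replicate_conv_if F2.m_assoc)
  also have "\<dots> = \<one>\<^bsub>F2 \<times>\<times> F2\<^esub>"
    using gen_a_carrier by (simp add: F2.nat_pow_inv)
  finally show ?thesis
    using path by (auto simp: accepting_comp_def abc_automaton_def abc_comp_def read_word_replicate)
qed

lemma length_abc_comp: "length (abc_comp n) = 3 * n + 2"
  by (simp add: abc_comp_def)

lemma abc_lang_in_weak_lin_class_F2_F2: "abc_lang \<in> weak_lin_class (F2 \<times>\<times> F2)"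
proof -
  have lang: "gaut_lang (F2 \<times>\<times> F2) abc_automaton = abc_lang"
    using abc_automaton_lang_subset abc_comp_accepting
    by (fastforce simp: abc_lang_def gaut_lang_def)
  have "linear_bound (\<lambda>n. n + 2)"
    unfolding linear_bound_def by (intro exI[of _ 2]) simp
  moreover have "weakly_time_bounded (F2 \<times>\<times> F2) abc_automaton (\<lambda>n. n + 2)"
    unfolding weakly_time_bounded_def lang
  proof
    fix w
    assume "w \<in> abc_lang"
    then obtain n where "w = replicate n 0 @ replicate n 1 @ replicate n 2"
      by (auto simp: abc_lang_def)
    then show "\<exists>ts. accepting_comp (F2 \<times>\<times> F2) abc_automaton w ts \<and> length ts \<le> length w + 2"
      using abc_comp_accepting length_abc_comp by (intro exI[of _ "abc_comp n"]) simp
  qed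
  ultimately show ?thesis
    unfolding weak_lin_class_def using wf_abc_automaton lang by blast
qed

definition lift_trans :: "('b, 'y) monoid_scheme \<Rightarrow> 'q \<times> 's option \<times> 'q \<times> 'g
    \<Rightarrow> 'q \<times> 's option \<times> 'q \<times> 'g \<times> 'b" where
  "lift_trans H t = (case t of (q, s, q', m) \<Rightarrow> (q, s, q', m, \<one>\<^bsub>H\<^esub>))"

definition lift_gaut ::
    "('b, 'y) monoid_scheme \<Rightarrow> ('q, 's, 'g) gautomaton \<Rightarrow> ('q, 's, 'g \<times> 'b) gautomaton" where
  "lift_gaut H A = \<lparr>states = states A, alphabet = alphabet A, init = init A,
     accepting = accepting A, trans = lift_trans H ` trans A\<rparr>"

lemma lift_gaut_simps [simp]:
  "states (lift_gaut H A) = states A" "alphabet (lift_gaut H A) = alphabet A"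
  "init (lift_gaut H A) = init A" "accepting (lift_gaut H A) = accepting A"
  "trans (lift_gaut H A) = lift_trans H ` trans A"
  by (simp_all add: lift_gaut_def)

lemma lift_trans_conv [simp]: "lift_trans H (q, s, q', m) = (q, s, q', m, \<one>\<^bsub>H\<^esub>)"
  by (simp add: lift_trans_def)

lemma gpath_lift_gaut: "gpath A q ts q' \<Longrightarrow> gpath (lift_gaut H A) q (map (lift_trans H) ts) q'"
  by (induction rule: gpath.induct) (auto intro!: gpath.intros rev_image_eqI)

lemma gpath_lift_gautD:
  "gpath (lift_gaut H A) q ts q' \<Longrightarrow> \<exists>ts0. ts = map (lift_trans H) ts0 \<and> gpath A q ts0 q'"
proof (induction rule: gpath.induct)
  case (step q s q' m ts q'')
  then obtain t0 ts0 where "t0 \<in> trans A" "lift_trans H t0 = (q, s, q', m)"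
    "ts = map (lift_trans H) ts0" "gpath A q' ts0 q''"
    by auto
  then show ?case
    by (cases t0) (auto intro!: exI[of _ "t0 # ts0"] gpath.step)
qed (auto intro: gpath.nil)

lemma read_word_lift_trans: "read_word (map (lift_trans H) ts) = read_word ts"
  by (induction ts) auto

lemma register_lift_trans:
  assumes "monoid H"
  shows "register (G \<times>\<times> H) (map (lift_trans H) ts) = (register G ts, \<one>\<^bsub>H\<^esub>)"
  by (induction ts rule: rev_induct)
    (auto simp: monoid.l_one[OF assms] monoid.one_closed[OF assms] lift_trans_def)

lemma accepting_comp_lift_gaut:
  assumes "monoid H"
  shows "accepting_comp (G \<times>\<times> H) (lift_gaut H A) w ts
    \<longleftrightarrow> (\<exists>ts0. ts = map (lift_trans H) ts0 \<and> accepting_comp G A w ts0)"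
proof
  assume "accepting_comp (G \<times>\<times> H) (lift_gaut H A) w ts"
  then obtain f where path: "gpath (lift_gaut H A) (init A) ts f" and "f \<in> accepting A"
    "read_word ts = w" "register (G \<times>\<times> H) ts = \<one>\<^bsub>G \<times>\<times> H\<^esub>"
    by (auto simp: accepting_comp_def)
  moreover obtain ts0 where "ts = map (lift_trans H) ts0" "gpath A (init A) ts0 f"
    using gpath_lift_gautD[OF path] by blast
  ultimately show "\<exists>ts0. ts = map (lift_trans H) ts0 \<and> accepting_comp G A w ts0"
    by (auto simp: accepting_comp_def read_word_lift_trans register_lift_trans[OF assms])
next
  assume "\<exists>ts0. ts = map (lift_trans H) ts0 \<and> accepting_comp G A w ts0"
  then obtain ts0 f where "ts = map (lift_trans H) ts0" "gpath A (init A) ts0 f" "f \<in> accepting A"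
    "read_word ts0 = w" "register G ts0 = \<one>\<^bsub>G\<^esub>"
    by (auto simp: accepting_comp_def)
  then show "accepting_comp (G \<times>\<times> H) (lift_gaut H A) w ts"
    using gpath_lift_gaut[of A "init A" ts0 f H]
    by (auto simp: accepting_comp_def read_word_lift_trans register_lift_trans[OF assms])
qed

lemma weak_lin_class_DirProd_mono:
  assumes "monoid H"
  shows "weak_lin_class G \<subseteq> weak_lin_class (G \<times>\<times> H)"
proof
  fix L
  assume "L \<in> weak_lin_class G"
  then obtain A :: "(nat, _, _) gautomaton" and t where
    A: "wf_gaut G A" "gaut_lang G A = L" "linear_bound t" "weakly_time_bounded G A t"
    by (auto simp: weak_lin_class_def)
  have "wf_gaut (G \<times>\<times> H) (lift_gaut H A)"
    using A(1) monoid.one_closed[OF assms] by (auto simp: wf_gaut_def lift_trans_def)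
  moreover have lang: "gaut_lang (G \<times>\<times> H) (lift_gaut H A) = L"
    using A(2) by (auto simp: gaut_lang_def accepting_comp_lift_gaut[OF assms])
  moreover have "weakly_time_bounded (G \<times>\<times> H) (lift_gaut H A) t"
    using A(2,4) unfolding weakly_time_bounded_def lang
    by (fastforce simp: accepting_comp_lift_gaut[OF assms])
  ultimately show "L \<in> weak_lin_class (G \<times>\<times> H)"
    unfolding weak_lin_class_def using A(3) by blast
qed

theorem theorem4p15:
  shows "(weak_lin_class F2 :: nat list set set) \<subset> weak_lin_class (F2 \<times>\<times> F2)"
proof -
  have "abc_lang \<notin> weak_lin_class F2"
    using abc_lang_not_F2_lang by (auto simp: weak_lin_class_def)
  then show ?thesis
    using weak_lin_class_DirProd_mono[OF group.is_monoid[OF group_F2]]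
      abc_lang_in_weak_lin_class_F2_F2
    by blast
qed

end
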